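(* Let $\mathcal{E}^*$ be any function mapping pairs (an $\mathcal{ALC}$-formula, an interpretation) to $\mathcal{ALC}$-formulae, let $\varphi$ be an $\mathcal{ALC}$-formula and $M$ an interpretation. If $\mathrm{Mod}(\mathcal{E}^*(\varphi,M))=\mathrm{Mod}(\varphi)\cup[M]_\varphi$, then (i) $\mathcal{E}^*(\varphi,M)\equiv\varphi$ if $M\models\varphi$, and (ii) $\mathcal{E}^*(\varphi,M)\equiv\varphi\vee\bigwedge\mathrm{lit}(f)$ if $M\not\models\varphi$, where $\mathrm{qm}(\neg\varphi,M)=(T,o,f)$.
   Context: $\mathcal{ALC}$ concepts: $C::=A\mid\neg C\mid(C\sqcap C)\mid\exists r.C$. $\mathcal{ALC}$-formulae: $\phi::=\alpha\mid\neg\phi\mid(\phi\wedge\phi)$, atomic $\alpha::=C(a)\mid r(a,b)\mid(C=\top)$; $\neg\neg\psi$ identified with $\psi$; $\vee$ usual abbreviation. A literal is an atomic formula or its negation. Interpretations: countable nonempty domain, standard semantics. $\mathrm{Mod}(\varphi)$: interpretations satisfying $\varphi$; $\equiv$: same models. $\mathrm{Sub}(\alpha)=\mathrm{Sub}(\neg\alpha)=\{\alpha,\neg\alpha\}$ for atomic $\alpha$; $\mathrm{Sub}(\psi\wedge\psi')=\mathrm{Sub}(\neg(\psi\wedge\psi'))=\{\psi\wedge\psi',\neg(\psi\wedge\psi')\}\cup\mathrm{Sub}(\psi)\cup\mathrm{Sub}(\psi')$. $\mathrm{con}(\varphi)$: smallest set of concepts containing $C$ whenever $(C=\top)$ or $C(a)$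 lies in $\mathrm{Sub}(\varphi)$, closed under subconcepts of $\sqcap$, $\exists r.\cdot$, and under single negation. For an interpretation $I$, $\mathrm{qm}(\varphi,I)=(T,o,f)$ with $T=\{c(x)\mid x\in\Delta^I\}$, $c(x)=\{C\in\mathrm{con}(\varphi)\mid x\in C^I\}$, $o(a)=c(a^I)$, $f=\{\psi\in\mathrm{Sub}(\varphi)\mid I\models\psi\}$. $\mathrm{lit}(f)$: literals in $f$. $\mathcal{L}_{lit}(\varphi)$: Boolean combinations of atomic formulae occurring in $\varphi$; $M'\equiv_\varphi M$ iff they satisfy the same formulae of $\mathcal{L}_{lit}(\varphi)$; $[M]_\varphi=\{M'\mid M'\equiv_\varphi M\}$. *)

theory Defs
  imports Main "HOL-Library.Countable_Set"
begin

datatype ('c, 'r) concept =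
    CAtom 'c
  | CNot "('c, 'r) concept"
  | CAnd "('c, 'r) concept" "('c, 'r) concept"
  | CEx 'r "('c, 'r) concept"

datatype ('c, 'r, 'i) formula =
    FCAss "('c, 'r) concept" 'i
  | FRAss 'r 'i 'i
  | FTBox "('c, 'r) concept"             (* C = top *)
  | FNot "('c, 'r, 'i) formula"
  | FAnd "('c, 'r, 'i) formula" "('c, 'r, 'i) formula"

text \<open>Negation respecting the identification of double negations with the formula itself.\<close>
fun fneg :: "('c, 'r, 'i) formula \<Rightarrow> ('c, 'r, 'i) formula" where
  "fneg (FNot \<psi>) = \<psi>"
| "fneg \<psi> = FNot \<psi>"

fun cneg :: "('c, 'r) concept \<Rightarrow> ('c, 'r) concept" where
  "cneg (CNot C) = C"
| "cneg C = CNot C"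

definition FOr :: "('c, 'r, 'i) formula \<Rightarrow> ('c, 'r, 'i) formula \<Rightarrow> ('c, 'r, 'i) formula" where
  "FOr \<psi> \<chi> = fneg (FAnd (fneg \<psi>) (fneg \<chi>))"

fun is_atomic :: "('c, 'r, 'i) formula \<Rightarrow> bool" where
  "is_atomic (FCAss C a) = True"
| "is_atomic (FRAss r a b) = True"
| "is_atomic (FTBox C) = True"
| "is_atomic _ = False"

definition is_literal :: "('c, 'r, 'i) formula \<Rightarrow> bool" where
  "is_literal \<psi> \<longleftrightarrow> is_atomic \<psi> \<or> (\<exists>\<alpha>. \<psi> = FNot \<alpha> \<and> is_atomic \<alpha>)"

fun Conj_list :: "('c, 'r, 'i) formula list \<Rightarrow> ('c, 'r, 'i) formula" where
  "Conj_list [] = undefined"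
| "Conj_list [\<psi>] = \<psi>"
| "Conj_list (\<psi> # xs) = FAnd \<psi> (Conj_list xs)"

record ('d, 'c, 'r, 'i) interp =
  dom  :: "'d set"
  cint :: "'c \<Rightarrow> 'd set"
  rint :: "'r \<Rightarrow> ('d \<times> 'd) set"
  iint :: "'i \<Rightarrow> 'd"

definition wf_interp :: "('d, 'c, 'r, 'i) interp \<Rightarrow> bool" where
  "wf_interp I \<longleftrightarrow> dom I \<noteq> {} \<and> countable (dom I)
     \<and> (\<forall>A. cint I A \<subseteq> dom I) \<and> (\<forall>r. rint I r \<subseteq> dom I \<times> dom I)
     \<and> (\<forall>a. iint I a \<in> dom I)"

fun cext :: "('d, 'c, 'r, 'i) interp \<Rightarrow> ('c, 'r) concept \<Rightarrow> 'd set" where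
  "cext I (CAtom A) = cint I A"
| "cext I (CNot C) = dom I - cext I C"
| "cext I (CAnd C D) = cext I C \<inter> cext I D"
| "cext I (CEx r C) = {x \<in> dom I. \<exists>y. (x, y) \<in> rint I r \<and> y \<in> cext I C}"

fun sat :: "('d, 'c, 'r, 'i) interp \<Rightarrow> ('c, 'r, 'i) formula \<Rightarrow> bool" (infix "\<Turnstile>" 50) where
  "sat I (FCAss C a) = (iint I a \<in> cext I C)"
| "sat I (FRAss r a b) = ((iint I a, iint I b) \<in> rint I r)"
| "sat I (FTBox C) = (cext I C = dom I)"
| "sat I (FNot \<psi>) = (\<not> sat I \<psi>)"
| "sat I (FAnd \<psi> \<chi>) = (sat I \<psi> \<and> sat I \<chi>)"

definition Mod :: "('c, 'r, 'i) formula \<Rightarrow> ('d, 'c, 'r, 'i) interp set" where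
  "Mod \<psi> = {I. wf_interp I \<and> I \<Turnstile> \<psi>}"

definition fequiv :: "('c, 'r, 'i) formula \<Rightarrow> ('c, 'r, 'i) formula \<Rightarrow> 'd itself \<Rightarrow> bool" where
  "fequiv \<psi> \<chi> (_ :: 'd itself) \<longleftrightarrow> (Mod \<psi> :: ('d, 'c, 'r, 'i) interp set) = Mod \<chi>"

fun Sub :: "('c, 'r, 'i) formula \<Rightarrow> ('c, 'r, 'i) formula set" where
  "Sub (FAnd \<psi> \<chi>) = {FAnd \<psi> \<chi>, FNot (FAnd \<psi> \<chi>)} \<union> Sub \<psi> \<union> Sub \<chi>"
| "Sub (FNot \<psi>) = Sub \<psi>"
| "Sub \<alpha> = {\<alpha>, FNot \<alpha>}"

inductive_set con :: "('c, 'r, 'i) formula \<Rightarrow> ('c, 'r) concept set" for \<phi> where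
  tbox: "FTBox C \<in> Sub \<phi> \<Longrightarrow> C \<in> con \<phi>"
| ass: "FCAss C a \<in> Sub \<phi> \<Longrightarrow> C \<in> con \<phi>"
| and1: "CAnd C D \<in> con \<phi> \<Longrightarrow> C \<in> con \<phi>"
| and2: "CAnd C D \<in> con \<phi> \<Longrightarrow> D \<in> con \<phi>"
| ex: "CEx r C \<in> con \<phi> \<Longrightarrow> C \<in> con \<phi>"
| neg: "C \<in> con \<phi> \<Longrightarrow> cneg C \<in> con \<phi>"

definition ctype :: "('c, 'r, 'i) formula \<Rightarrow> ('d, 'c, 'r, 'i) interp \<Rightarrow> 'd \<Rightarrow> ('c, 'r) concept set" where
  "ctype \<phi> I x = {C \<in> con \<phi>. x \<in> cext I C}"

definition qm :: "('c, 'r, 'i) formula \<Rightarrow> ('d, 'c, 'r, 'i) interp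
     \<Rightarrow> ('c, 'r) concept set set \<times> ('i \<Rightarrow> ('c, 'r) concept set) \<times> ('c, 'r, 'i) formula set" where
  "qm \<phi> I = ({ctype \<phi> I x | x. x \<in> dom I}, (\<lambda>a. ctype \<phi> I (iint I a)), {\<psi> \<in> Sub \<phi>. I \<Turnstile> \<psi>})"

definition lit :: "('c, 'r, 'i) formula set \<Rightarrow> ('c, 'r, 'i) formula set" where
  "lit f = {\<psi> \<in> f. is_literal \<psi>}"

definition atoms :: "('c, 'r, 'i) formula \<Rightarrow> ('c, 'r, 'i) formula set" where
  "atoms \<phi> = {\<alpha> \<in> Sub \<phi>. is_atomic \<alpha>}"

inductive_set Llit :: "('c, 'r, 'i) formula \<Rightarrow> ('c, 'r, 'i) formula set" for \<phi> where
  atom: "\<alpha> \<in> atoms \<phi> \<Longrightarrow> \<alpha> \<in> Llit \<phi>"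
| neg: "\<psi> \<in> Llit \<phi> \<Longrightarrow> fneg \<psi> \<in> Llit \<phi>"
| conj: "\<psi> \<in> Llit \<phi> \<Longrightarrow> \<chi> \<in> Llit \<phi> \<Longrightarrow> FAnd \<psi> \<chi> \<in> Llit \<phi>"

definition lit_equiv :: "('c, 'r, 'i) formula \<Rightarrow> ('d, 'c, 'r, 'i) interp \<Rightarrow> ('d, 'c, 'r, 'i) interp \<Rightarrow> bool" where
  "lit_equiv \<phi> M' M \<longleftrightarrow> (\<forall>\<psi> \<in> Llit \<phi>. M' \<Turnstile> \<psi> \<longleftrightarrow> M \<Turnstile> \<psi>)"

definition lit_class :: "('c, 'r, 'i) formula \<Rightarrow> ('d, 'c, 'r, 'i) interp \<Rightarrow> ('d, 'c, 'r, 'i) interp set" where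
  "lit_class \<phi> M = {M'. wf_interp M' \<and> lit_equiv \<phi> M' M}"

end

theory Submission
  imports Defs
begin

text \<open>
  Membership in the literal class of M depends only on the truth values of the atoms of \<phi>,
  and so does satisfaction of \<phi>. Hence if M satisfies \<phi> its whole class already consists of
  models of \<phi>. Otherwise the class is axiomatised by the literals of Sub \<phi> that hold in M:
  since Sub contains every atom together with its negation, these literals fix the truth value
  of each atom of \<phi> to the one it has in M.
\<close>

lemma sat_fneg [simp]: "I \<Turnstile> fneg \<psi> \<longleftrightarrow> \<not> I \<Turnstile> \<psi>"
  by (cases \<psi>) auto

lemma sat_FOr [simp]: "I \<Turnstile> FOr \<psi> \<chi> \<longleftrightarrow> I \<Turnstile> \<psi> \<or> I \<Turnstile> \<chi>"
  by (simp add: FOr_def)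

lemma sat_Conj_list: "xs \<noteq> [] \<Longrightarrow> I \<Turnstile> Conj_list xs \<longleftrightarrow> (\<forall>\<psi>\<in>set xs. I \<Turnstile> \<psi>)"
  by (induction xs rule: Conj_list.induct) auto

lemma Mod_FOr: "Mod (FOr \<psi> \<chi>) = Mod \<psi> \<union> Mod \<chi>"
  by (auto simp: Mod_def)

lemma Sub_fneg [simp]: "Sub (fneg \<phi>) = Sub \<phi>"
  by (cases \<phi>) auto

lemma FNot_in_Sub_iff: "is_atomic \<alpha> \<Longrightarrow> FNot \<alpha> \<in> Sub \<phi> \<longleftrightarrow> \<alpha> \<in> Sub \<phi>"
  by (induction \<phi>) (cases \<alpha>; auto)+

lemma atoms_atomic: "is_atomic \<alpha> \<Longrightarrow> atoms \<alpha> = {\<alpha>}"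
  by (cases \<alpha>) (auto simp: atoms_def)

lemma atoms_FNot [simp]: "atoms (FNot \<psi>) = atoms \<psi>"
  by (simp add: atoms_def)

lemma atoms_FAnd [simp]: "atoms (FAnd \<psi> \<chi>) = atoms \<psi> \<union> atoms \<chi>"
  by (auto simp: atoms_def)

lemma atoms_nonempty: "atoms \<phi> \<noteq> {}"
  by (induction \<phi>) (simp_all add: atoms_atomic)

lemma sat_eq_if_atoms_agree:
  assumes "\<forall>\<alpha>\<in>atoms \<phi>. I \<Turnstile> \<alpha> \<longleftrightarrow> M \<Turnstile> \<alpha>"
  shows "I \<Turnstile> \<phi> \<longleftrightarrow> M \<Turnstile> \<phi>"
  using assms by (induction \<phi>) (simp_all add: atoms_atomic)

lemma lit_equiv_iff_atoms_agree:
  "lit_equiv \<phi> I M \<longleftrightarrow> (\<forall>\<alpha>\<in>atoms \<phi>. I \<Turnstile> \<alpha> \<longleftrightarrow> M \<Turnstile> \<alpha>)"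
proof
  assume "lit_equiv \<phi> I M"
  then show "\<forall>\<alpha>\<in>atoms \<phi>. I \<Turnstile> \<alpha> \<longleftrightarrow> M \<Turnstile> \<alpha>"
    by (auto simp: lit_equiv_def intro: Llit.atom)
next
  assume agree: "\<forall>\<alpha>\<in>atoms \<phi>. I \<Turnstile> \<alpha> \<longleftrightarrow> M \<Turnstile> \<alpha>"
  have "I \<Turnstile> \<psi> \<longleftrightarrow> M \<Turnstile> \<psi>" if "\<psi> \<in> Llit \<phi>" for \<psi>
    using that agree by induction auto
  then show "lit_equiv \<phi> I M"
    by (simp add: lit_equiv_def)
qed

lemma lit_class_subset_Mod:
  assumes "M \<Turnstile> \<phi>"
  shows "lit_class \<phi> M \<subseteq> Mod \<phi>"
  using assms sat_eq_if_atoms_agree[of \<phi>]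
  by (auto simp: lit_class_def Mod_def lit_equiv_iff_atoms_agree)

lemma lit_Sub_true_nonempty: "lit {\<psi> \<in> Sub \<phi>. M \<Turnstile> \<psi>} \<noteq> {}"
proof -
  obtain \<alpha> where \<alpha>: "\<alpha> \<in> atoms \<phi>"
    using atoms_nonempty by blast
  then have "is_atomic \<alpha>" "\<alpha> \<in> Sub \<phi>" "FNot \<alpha> \<in> Sub \<phi>"
    by (auto simp: atoms_def FNot_in_Sub_iff)
  then have "\<alpha> \<in> lit {\<psi> \<in> Sub \<phi>. M \<Turnstile> \<psi>} \<or> FNot \<alpha> \<in> lit {\<psi> \<in> Sub \<phi>. M \<Turnstile> \<psi>}"
    by (auto simp: lit_def is_literal_def)
  then show ?thesis
    by blast
qed

lemma sat_lit_Sub_true_iff_lit_equiv: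
  "(\<forall>\<psi>\<in>lit {\<psi> \<in> Sub \<phi>. M \<Turnstile> \<psi>}. I \<Turnstile> \<psi>) \<longleftrightarrow> lit_equiv \<phi> I M"
proof
  assume sat_lits: "\<forall>\<psi>\<in>lit {\<psi> \<in> Sub \<phi>. M \<Turnstile> \<psi>}. I \<Turnstile> \<psi>"
  have "I \<Turnstile> \<alpha> \<longleftrightarrow> M \<Turnstile> \<alpha>" if "\<alpha> \<in> atoms \<phi>" for \<alpha>
  proof -
    from that have "is_atomic \<alpha>" "\<alpha> \<in> Sub \<phi>" "FNot \<alpha> \<in> Sub \<phi>"
      by (auto simp: atoms_def FNot_in_Sub_iff)
    then have "\<alpha> \<in> lit {\<psi> \<in> Sub \<phi>. M \<Turnstile> \<psi>} \<or> FNot \<alpha> \<in> lit {\<psi> \<in> Sub \<phi>. M \<Turnstile> \<psi>}"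
      and "M \<Turnstile> \<alpha> \<longleftrightarrow> \<alpha> \<in> lit {\<psi> \<in> Sub \<phi>. M \<Turnstile> \<psi>}"
      and "\<not> M \<Turnstile> \<alpha> \<longleftrightarrow> FNot \<alpha> \<in> lit {\<psi> \<in> Sub \<phi>. M \<Turnstile> \<psi>}"
      by (auto simp: lit_def is_literal_def)
    then show ?thesis
      using sat_lits by force
  qed
  then show "lit_equiv \<phi> I M"
    by (simp add: lit_equiv_iff_atoms_agree)
next
  assume "lit_equiv \<phi> I M"
  then have agree: "\<forall>\<alpha>\<in>atoms \<phi>. I \<Turnstile> \<alpha> \<longleftrightarrow> M \<Turnstile> \<alpha>"
    by (simp add: lit_equiv_iff_atoms_agree)
  show "\<forall>\<psi>\<in>lit {\<psi> \<in> Sub \<phi>. M \<Turnstile> \<psi>}. I \<Turnstile> \<psi>"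
  proof
    fix \<psi> assume "\<psi> \<in> lit {\<psi> \<in> Sub \<phi>. M \<Turnstile> \<psi>}"
    then have "\<psi> \<in> Sub \<phi>" "M \<Turnstile> \<psi>" "is_literal \<psi>"
      by (auto simp: lit_def)
    then show "I \<Turnstile> \<psi>"
      using agree by (auto simp: is_literal_def atoms_def FNot_in_Sub_iff)
  qed
qed

lemma lit_class_eq_Mod_Conj_list:
  assumes "set xs = lit {\<psi> \<in> Sub \<phi>. M \<Turnstile> \<psi>}"
  shows "lit_class \<phi> M = Mod (Conj_list xs)"
proof -
  have "xs \<noteq> []"
    using assms lit_Sub_true_nonempty by force
  then show ?thesis
    using assms sat_lit_Sub_true_iff_lit_equiv[of \<phi> M]
    by (auto simp: lit_class_def Mod_def sat_Conj_list)
qed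

theorem mainTheorem6:
  fixes E :: "('c, 'r, 'i) formula \<Rightarrow> ('d, 'c, 'r, 'i) interp \<Rightarrow> ('c, 'r, 'i) formula"
    and \<phi> :: "('c, 'r, 'i) formula"
    and M :: "('d, 'c, 'r, 'i) interp"
  assumes "wf_interp M"
    and "(Mod (E \<phi> M) :: ('d, 'c, 'r, 'i) interp set) = Mod \<phi> \<union> lit_class \<phi> M"
  shows "(M \<Turnstile> \<phi> \<longrightarrow> fequiv (E \<phi> M) \<phi> TYPE('d))
       \<and> (\<not> M \<Turnstile> \<phi> \<longrightarrow>
           (\<forall>T ob f. qm (fneg \<phi>) M = (T, ob, f) \<longrightarrow>
              (\<forall>xs. set xs = lit f \<longrightarrow>
                  fequiv (E \<phi> M) (FOr \<phi> (Conj_list xs)) TYPE('d))))"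
proof (intro conjI impI allI)
  assume "M \<Turnstile> \<phi>"
  then show "fequiv (E \<phi> M) \<phi> TYPE('d)"
    using assms(2) lit_class_subset_Mod by (auto simp: fequiv_def)
next
  fix T ob f and xs :: "('c, 'r, 'i) formula list"
  assume "qm (fneg \<phi>) M = (T, ob, f)" and "set xs = lit f"
  then have "set xs = lit {\<psi> \<in> Sub \<phi>. M \<Turnstile> \<psi>}"
    by (auto simp: qm_def)
  then show "fequiv (E \<phi> M) (FOr \<phi> (Conj_list xs)) TYPE('d)"
    using assms(2) by (simp add: fequiv_def Mod_FOr lit_class_eq_Mod_Conj_list)
qed

end
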